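(* Let $n\ge 5$ and let $G$ be a connected simple graph with $n$ vertices and $n+1$ edges. Then \[ \operatorname{avm}(G)\ge \frac{4n-11}{2n-5}. \] Moreover, equality holds if and only if $G\cong \theta_n^1(3,3)$.
   Context: For a finite simple graph $G$, a matching is a set of pairwise vertex-disjoint edges; it is maximal if it is not properly contained in another matching. Let $\mathcal{M}(G)$ be the set of maximal matchings of $G$. The average size of maximal matchings is $\operatorname{avm}(G)=\frac{1}{|\mathcal{M}(G)|}\sum_{M\in\mathcal{M}(G)}|M|$. For $n\ge 4$, $\theta_n^1(3,3)$ denotes the graph obtained from $K_4$ minus an edge (vertices $u,v,x,y$ with edges $uv,ux,uy,vx,vy$; i.e. two triangles sharing the edge $uv$) by attaching $n-4$ pendant edges (new leaves) to the vertex $u$, one of the two vertices of degree $3$. *)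

theory Defs
  imports Complex_Main
begin

definition simple_graph :: "'a set \<Rightarrow> 'a set set \<Rightarrow> bool" where
  "simple_graph V E \<longleftrightarrow> finite V \<and> (\<forall>e\<in>E. e \<subseteq> V \<and> card e = 2)"

definition adj_rel :: "'a set set \<Rightarrow> ('a \<times> 'a) set" where
  "adj_rel E = {(x, y). {x, y} \<in> E}"

definition connected_graph :: "'a set \<Rightarrow> 'a set set \<Rightarrow> bool" where
  "connected_graph V E \<longleftrightarrow> (\<forall>u\<in>V. \<forall>v\<in>V. (u, v) \<in> (adj_rel E)\<^sup>*)"

definition matching :: "'a set set \<Rightarrow> 'a set set \<Rightarrow> bool" where
  "matching E M \<longleftrightarrow> M \<subseteq> E \<and> (\<forall>e1\<in>M. \<forall>e2\<in>M. e1 \<noteq> e2 \<longrightarrow> e1 \<inter> e2 = {})"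

definition maximal_matching :: "'a set set \<Rightarrow> 'a set set \<Rightarrow> bool" where
  "maximal_matching E M \<longleftrightarrow> matching E M \<and> (\<forall>M'. matching E M' \<and> M \<subseteq> M' \<longrightarrow> M' = M)"

definition maximal_matchings :: "'a set set \<Rightarrow> 'a set set set" where
  "maximal_matchings E = {M. maximal_matching E M}"

definition avm :: "'a set set \<Rightarrow> real" where
  "avm E = (\<Sum>M\<in>maximal_matchings E. real (card M)) / real (card (maximal_matchings E))"

definition graph_iso :: "'a set \<Rightarrow> 'a set set \<Rightarrow> 'b set \<Rightarrow> 'b set set \<Rightarrow> bool" where
  "graph_iso V E W F \<longleftrightarrow> (\<exists>f. bij_betw f V W \<and>
     (\<forall>x\<in>V. \<forall>y\<in>V. {x, y} \<in> E \<longleftrightarrow> {f x, f y} \<in> F))"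

text \<open>theta_n^1(3,3): vertices 0..n-1, u=0, v=1, x=2, y=3, leaves 4..n-1 attached to u.\<close>
definition theta_V :: "nat \<Rightarrow> nat set" where
  "theta_V n = {0..<n}"

definition theta_E :: "nat \<Rightarrow> nat set set" where
  "theta_E n = {{0,1},{0,2},{0,3},{1,2},{1,3}} \<union> {{0, i} | i. 4 \<le> i \<and> i < n}"

end

theory Submission
  imports Defs
begin

(* If some edge uv meets every edge, then E consists of uv, the edges uw with w in A and the edges
   vw with w in B, where A and B are the other neighbours of u and of v. Connectivity and |E| = n + 1 give |A| + |B| = n and |A Int B| = 2, so |A|, |B| >= 2, and
   the maximal matchings are {uv} together with the p = |A| |B| - 2 matchings {uw, vw'} with w ~= w'.
   Hence avm = (1 + 2p) / (1 + p), which is increasing in p, while the bound is its value at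
   p = 2n - 6, and p - (2n - 6) = (|A| - 2) (|B| - 2) >= 0. Equality means |A| = 2 or |B| = 2, which
   is exactly the shape of theta_n^1(3,3). Without such an edge every maximal matching has at least
   two edges, so avm >= 2 > (4n - 11) / (2n - 5). *)

lemma simple_graph_finite_edges: "simple_graph V E \<Longrightarrow> finite E"
  unfolding simple_graph_def by (meson Pow_iff finite_Pow_iff finite_subset subsetI)

lemma simple_graph_edgeE:
  assumes "simple_graph V E" "e \<in> E"
  obtains a b where "a \<noteq> b" "e = {a, b}" "a \<in> V" "b \<in> V"
  using assms unfolding simple_graph_def by (metis card_2_iff insert_subset)

lemma simple_graph_edgeD:
  assumes "simple_graph V E" "{a, b} \<in> E"
  shows "a \<noteq> b" "a \<in> V" "b \<in> V"
  using assms unfolding simple_graph_def by (metis card_2_iff doubleton_eq_iff insert_subset)+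

lemma connected_graph_has_neighbor:
  assumes "connected_graph V E" "u \<in> V" "w \<in> V" "u \<noteq> w"
  obtains z where "{z, w} \<in> E"
proof -
  have "(u, w) \<in> (adj_rel E)\<^sup>*" using assms by (simp add: connected_graph_def)
  then obtain z where "(z, w) \<in> adj_rel E" using \<open>u \<noteq> w\<close> by (cases rule: rtranclE) auto
  then show thesis using that by (simp add: adj_rel_def)
qed

lemma maximal_matching_iff:
  "maximal_matching E M \<longleftrightarrow> matching E M \<and> (\<forall>e\<in>E - M. \<exists>f\<in>M. e \<inter> f \<noteq> {})"
proof
  assume max: "maximal_matching E M"
  then have M: "matching E M" by (simp add: maximal_matching_def)
  have "\<exists>f\<in>M. e \<inter> f \<noteq> {}" if e: "e \<in> E - M" for e
  proof (rule ccontr)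
    assume "\<not> (\<exists>f\<in>M. e \<inter> f \<noteq> {})"
    then have "\<forall>f\<in>M. e \<inter> f = {} \<and> f \<inter> e = {}" by blast
    then have "matching E (insert e M)" using M e by (auto simp: matching_def)
    then have "insert e M = M" using max unfolding maximal_matching_def by blast
    with e show False by blast
  qed
  with M show "matching E M \<and> (\<forall>e\<in>E - M. \<exists>f\<in>M. e \<inter> f \<noteq> {})" by blast
next
  assume "matching E M \<and> (\<forall>e\<in>E - M. \<exists>f\<in>M. e \<inter> f \<noteq> {})"
  then have M: "matching E M" and meets: "\<And>e. e \<in> E - M \<Longrightarrow> \<exists>f\<in>M. e \<inter> f \<noteq> {}"
    by auto
  show "maximal_matching E M"
    unfolding maximal_matching_def
  proof (intro conjI allI impI)
    fix M' assume M': "matching E M' \<and> M \<subseteq> M'"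
    have "e \<in> M" if "e \<in> M'" for e
    proof (rule ccontr)
      assume "e \<notin> M"
      moreover have "e \<in> E" using M' that by (auto simp: matching_def)
      ultimately obtain f where f: "f \<in> M" "e \<inter> f \<noteq> {}" using meets by blast
      moreover have "f \<in> M'" "e \<noteq> f" using M' f(1) \<open>e \<notin> M\<close> by auto
      ultimately show False using M' that unfolding matching_def by blast
    qed
    then show "M' = M" using M' by blast
  qed (fact M)
qed

lemma maximal_matching_exists:
  assumes "finite E"
  shows "\<exists>M. maximal_matching E M"
proof -
  let ?S = "{M. matching E M}"
  have "?S \<subseteq> Pow E" by (auto simp: matching_def)
  then have "finite ?S" using assms by (simp add: finite_subset)
  moreover have "?S \<noteq> {}" by (auto simp: matching_def)
  ultimately obtain M where "M \<in> ?S" "\<forall>M'\<in>?S. M \<subseteq> M' \<longrightarrow> M = M'"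
    by (metis finite_has_maximal)
  then have "maximal_matching E M" by (auto simp: maximal_matching_def)
  then show ?thesis ..
qed

lemma finite_maximal_matchings: "finite E \<Longrightarrow> finite (maximal_matchings E)"
  by (rule finite_subset[of _ "Pow E"])
    (auto simp: maximal_matchings_def maximal_matching_def matching_def)

lemma avm_ge:
  assumes "finite E" and "\<And>M. maximal_matching E M \<Longrightarrow> k \<le> card M"
  shows "real k \<le> avm E"
proof -
  let ?MM = "maximal_matchings E"
  have "?MM \<noteq> {}" using maximal_matching_exists[OF assms(1)] by (simp add: maximal_matchings_def)
  then have pos: "0 < real (card ?MM)" using finite_maximal_matchings[OF assms(1)] by (simp add: card_gt_0_iff)
  have "real k * real (card ?MM) = (\<Sum>M\<in>?MM. real k)" by simp
  also have "\<dots> \<le> (\<Sum>M\<in>?MM. real (card M))"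
    using assms(2) by (intro sum_mono) (simp add: maximal_matchings_def)
  finally show ?thesis using pos by (simp add: avm_def pos_le_divide_eq)
qed

definition dominating_edge :: "'a set set \<Rightarrow> 'a \<Rightarrow> 'a \<Rightarrow> bool" where
  "dominating_edge E u v \<longleftrightarrow> u \<noteq> v \<and> {u, v} \<in> E \<and> (\<forall>e\<in>E. u \<in> e \<or> v \<in> e)"

lemma card_maximal_matching_ge_2:
  assumes G: "simple_graph V E" and "E \<noteq> {}" and no_dom: "\<not> (\<exists>u v. dominating_edge E u v)"
    and max: "maximal_matching E M"
  shows "2 \<le> card M"
proof -
  have M: "matching E M" and meets: "\<And>e. e \<in> E - M \<Longrightarrow> \<exists>f\<in>M. e \<inter> f \<noteq> {}"
    using max by (auto simp: maximal_matching_iff)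
  have "finite M"
    using M simple_graph_finite_edges[OF G] by (meson finite_subset matching_def)
  moreover have "M \<noteq> {}" using \<open>E \<noteq> {}\<close> meets by blast
  ultimately have "card M \<noteq> 0" by simp
  moreover have "card M \<noteq> 1"
  proof
    assume "card M = 1"
    then obtain e where Me: "M = {e}" by (rule card_1_singletonE)
    then have "e \<in> E" using M by (simp add: matching_def)
    then obtain a b where ab: "a \<noteq> b" "e = {a, b}" by (rule simple_graph_edgeE[OF G])
    have "a \<in> f \<or> b \<in> f" if "f \<in> E" for f
    proof (cases "f = e")
      case False
      then have "f \<inter> e \<noteq> {}" using meets[of f] that Me by auto
      then show ?thesis using ab(2) by auto
    qed (use ab in simp)
    then have "dominating_edge E a b"
      unfolding dominating_edge_def using ab \<open>e \<in> E\<close> by blast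
    then show False using no_dom by blast
  qed
  ultimately show ?thesis by linarith
qed

lemma avm_ge_2_if_no_dominating_edge:
  assumes "simple_graph V E" and "E \<noteq> {}" and "\<not> (\<exists>u v. dominating_edge E u v)"
  shows "2 \<le> avm E"
  using avm_ge[OF simple_graph_finite_edges[OF assms(1)] card_maximal_matching_ge_2[OF assms]] by simp

lemma graph_iso_image:
  assumes f: "bij_betw f V W" and E: "\<forall>e\<in>E. e \<subseteq> V"
  shows "graph_iso V E W ((`) f ` E)"
  unfolding graph_iso_def
proof (intro exI conjI ballI)
  show "bij_betw f V W" by (fact f)
  have inj: "inj_on f V" using f by (rule bij_betw_imp_inj_on)
  fix x y assume xy: "x \<in> V" "y \<in> V"
  show "{x, y} \<in> E \<longleftrightarrow> {f x, f y} \<in> (`) f ` E"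
  proof
    assume "{x, y} \<in> E"
    then show "{f x, f y} \<in> (`) f ` E" by (metis image_empty image_eqI image_insert)
  next
    assume "{f x, f y} \<in> (`) f ` E"
    then obtain e where e: "e \<in> E" "f ` e = f ` {x, y}" by auto
    then have "e = {x, y}" using inj_on_image_eq_iff[OF inj, of e "{x, y}"] E xy by blast
    with e show "{x, y} \<in> E" by simp
  qed
qed

lemma ex_bij_betw_extending_list:
  assumes V: "finite V" "card V = n" and xs: "distinct xs" "set xs \<subseteq> V"
  obtains f where "bij_betw f V {0..<n}" "\<And>i. i < length xs \<Longrightarrow> f (xs ! i) = i"
proof -
  let ?k = "length xs"
  have k: "?k \<le> n" using V xs card_mono[of V "set xs"] by (simp add: distinct_card)
  have "card (V - set xs) = card {?k..<n}"
    using V xs by (simp add: card_Diff_subset distinct_card)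
  then obtain h where h: "bij_betw h {?k..<n} (V - set xs)"
    using V finite_same_card_bij[of "{?k..<n}" "V - set xs"] by auto
  let ?g = "\<lambda>i. if i \<in> {..<?k} then xs ! i else h i"
  have "bij_betw ?g ({..<?k} \<union> {?k..<n}) (set xs \<union> (V - set xs))"
    by (rule bij_betw_disjoint_Un[OF bij_betw_nth[OF xs(1) refl refl] h]) auto
  moreover have "{..<?k} \<union> {?k..<n} = {0..<n}" "set xs \<union> (V - set xs) = V" using k xs by auto
  ultimately have g: "bij_betw ?g {0..<n} V" by simp
  show thesis
  proof
    show "bij_betw (inv_into {0..<n} ?g) V {0..<n}" using g by (rule bij_betw_inv_into)
    fix i assume "i < ?k"
    then show "inv_into {0..<n} ?g (xs ! i) = i"
      using g k inv_into_f_f[of ?g "{0..<n}" i] by (simp add: bij_betw_def)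
  qed
qed

lemma graph_iso_dominating_edge:
  assumes iso: "graph_iso V E W F" and G: "simple_graph V E"
    and dom: "dominating_edge F i j" and "i \<in> W" "j \<in> W"
  shows "\<exists>p q. dominating_edge E p q"
proof -
  obtain f where f: "bij_betw f V W" and edges: "\<forall>x\<in>V. \<forall>y\<in>V. {x, y} \<in> E \<longleftrightarrow> {f x, f y} \<in> F"
    using iso unfolding graph_iso_def by blast
  have "i \<in> f ` V" "j \<in> f ` V" using f \<open>i \<in> W\<close> \<open>j \<in> W\<close> by (simp_all add: bij_betw_def)
  then obtain p q where pq: "p \<in> V" "q \<in> V" "f p = i" "f q = j" by (elim imageE) simp
  have inj: "inj_on f V" using f by (rule bij_betw_imp_inj_on)
  have "p \<in> e \<or> q \<in> e" if "e \<in> E" for e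
  proof -
    obtain a b where ab: "e = {a, b}" "a \<in> V" "b \<in> V" by (rule simple_graph_edgeE[OF G \<open>e \<in> E\<close>])
    then have "{f a, f b} \<in> F" using edges \<open>e \<in> E\<close> by simp
    have "\<forall>e\<in>F. i \<in> e \<or> j \<in> e" using dom by (simp add: dominating_edge_def)
    then have "f p \<in> {f a, f b} \<or> f q \<in> {f a, f b}"
      unfolding pq(3,4) using \<open>{f a, f b} \<in> F\<close> by (rule bspec)
    then show ?thesis using inj ab pq by (auto dest: inj_onD)
  qed
  moreover have "p \<noteq> q" "{p, q} \<in> E" using dom edges pq by (auto simp: dominating_edge_def)
  ultimately have "dominating_edge E p q" by (simp add: dominating_edge_def)
  then show ?thesis by blast
qed

lemma graph_iso_universal_vertex:
  assumes iso: "graph_iso V E W F" and "i \<in> W" and univ: "\<forall>j\<in>W - {i}. {i, j} \<in> F"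
  shows "\<exists>p\<in>V. \<forall>w\<in>V - {p}. {p, w} \<in> E"
proof -
  obtain f where f: "bij_betw f V W" and edges: "\<forall>x\<in>V. \<forall>y\<in>V. {x, y} \<in> E \<longleftrightarrow> {f x, f y} \<in> F"
    using iso unfolding graph_iso_def by blast
  have "i \<in> f ` V" using f \<open>i \<in> W\<close> by (simp add: bij_betw_def)
  then obtain p where p: "p \<in> V" "f p = i" by (elim imageE) simp
  have "{p, w} \<in> E" if "w \<in> V - {p}" for w
  proof -
    have "f w \<in> W - {i}" using f p that by (auto simp: bij_betw_def dest: inj_onD)
    then show ?thesis using univ edges p that by simp
  qed
  with p show ?thesis by blast
qed

lemma theta_E_eq:
  assumes "4 \<le> n"
  shows "theta_E n = insert {0, 1} ((\<lambda>i. {0, i}) ` {2..<n} \<union> (\<lambda>i. {1, i}) ` {2, 3})"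
proof -
  define X where "X = (\<lambda>i. {0::nat, i}) ` {4..<n}"
  have "{{0, i} | i. 4 \<le> i \<and> i < n} = X"
    unfolding X_def by (auto simp: setcompr_eq_image)
  moreover have "(\<lambda>i. {0, i}) ` {2..<n} = insert {0, 2} (insert {0, 3} X)"
  proof -
    have "{2..<n} = insert 2 (insert 3 {4..<n})" using assms by auto
    then show ?thesis unfolding X_def by simp
  qed
  ultimately show ?thesis unfolding theta_E_def by auto
qed

lemma dominating_edge_theta: "4 \<le> n \<Longrightarrow> dominating_edge (theta_E n) 0 1"
  by (simp add: dominating_edge_def theta_E_eq)

lemma theta_universal_vertex:
  assumes "4 \<le> n"
  shows "\<forall>j\<in>theta_V n - {0}. {0, j} \<in> theta_E n"
proof
  fix j assume "j \<in> theta_V n - {0}"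
  then have "j = 1 \<or> j \<in> {2..<n}" by (auto simp: theta_V_def)
  then show "{0, j} \<in> theta_E n"
    unfolding theta_E_eq[OF assms] by blast
qed

lemma one_plus_two_ratio_le_iff:
  fixes s t :: real
  assumes "0 \<le> s" and "0 \<le> t"
  shows "(1 + 2 * s) / (1 + s) \<le> (1 + 2 * t) / (1 + t) \<longleftrightarrow> s \<le> t"
  using assms by (simp add: divide_le_eq le_divide_eq field_simps)

lemma one_plus_two_ratio_eq_iff:
  fixes s t :: real
  assumes "0 \<le> s" and "0 \<le> t"
  shows "(1 + 2 * s) / (1 + s) = (1 + 2 * t) / (1 + t) \<longleftrightarrow> s = t"
  using one_plus_two_ratio_le_iff[OF assms] one_plus_two_ratio_le_iff[OF assms(2,1)] by (metis order_antisym order_refl)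

definition neighbors :: "'a set set \<Rightarrow> 'a \<Rightarrow> 'a set" where
  "neighbors E w = {x. {w, x} \<in> E}"

locale dominating_edge_graph =
  fixes V :: "'a set" and E :: "'a set set" and u v :: 'a
  assumes simple: "simple_graph V E" and dominating: "dominating_edge E u v"
begin

abbreviation A :: "'a set" where "A \<equiv> neighbors E u - {v}"
abbreviation B :: "'a set" where "B \<equiv> neighbors E v - {u}"

lemma u_neq_v: "u \<noteq> v" and uv_edge: "{u, v} \<in> E"
  and edge_meets_uv: "e \<in> E \<Longrightarrow> u \<in> e \<or> v \<in> e"
  using dominating by (auto simp: dominating_edge_def)

lemma swap: "dominating_edge_graph V E v u"
  using simple dominating by unfold_locales (auto simp: dominating_edge_def insert_commute)

lemma finite_V: "finite V"
  using simple by (simp add: simple_graph_def)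

lemma u_in_V: "u \<in> V" and v_in_V: "v \<in> V"
  using simple_graph_edgeD[OF simple uv_edge] by auto

lemma edge_through:
  assumes "e \<in> E" "x \<in> e"
  obtains y where "e = {x, y}"
  using simple_graph_edgeE[OF simple assms(1)] assms(2) by (metis insert_commute insertE singletonD)

lemma A_subset: "A \<subseteq> V - {u, v}"
  using simple_graph_edgeD[OF simple] by (auto simp: neighbors_def)

lemma B_subset: "B \<subseteq> V - {u, v}"
  using dominating_edge_graph.A_subset[OF swap] by (simp add: insert_commute)

lemma finite_A: "finite A"
  using finite_V by (rule finite_subset[OF A_subset, OF finite_Diff])

lemma finite_B: "finite B"
  using finite_V by (rule finite_subset[OF B_subset, OF finite_Diff])

lemma edges_eq: "E = insert {u, v} ((\<lambda>w. {u, w}) ` A \<union> (\<lambda>w. {v, w}) ` B)"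
proof
  show "E \<subseteq> insert {u, v} ((\<lambda>w. {u, w}) ` A \<union> (\<lambda>w. {v, w}) ` B)"
  proof
    fix e assume e: "e \<in> E"
    consider "u \<in> e" | "v \<in> e" using edge_meets_uv[OF e] by blast
    then show "e \<in> insert {u, v} ((\<lambda>w. {u, w}) ` A \<union> (\<lambda>w. {v, w}) ` B)"
    proof cases
      case 1
      then obtain w where "e = {u, w}" by (rule edge_through[OF e])
      then show ?thesis using e by (cases "w = v") (auto simp: neighbors_def)
    next
      case 2
      then obtain w where "e = {v, w}" by (rule edge_through[OF e])
      then show ?thesis using e by (cases "w = u") (auto simp: neighbors_def insert_commute)
    qed
  qed
  show "insert {u, v} ((\<lambda>w. {u, w}) ` A \<union> (\<lambda>w. {v, w}) ` B) \<subseteq> E"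
    using uv_edge by (auto simp: neighbors_def)
qed

lemma card_edges: "card E = card A + card B + 1"
proof -
  have "inj_on (\<lambda>w. {u, w}) A" "inj_on (\<lambda>w. {v, w}) B"
    using A_subset B_subset by (auto simp: inj_on_def doubleton_eq_iff)
  moreover have "(\<lambda>w. {u, w}) ` A \<inter> (\<lambda>w. {v, w}) ` B = {}"
    using A_subset B_subset u_neq_v by (auto simp: doubleton_eq_iff)
  moreover have "{u, v} \<notin> (\<lambda>w. {u, w}) ` A \<union> (\<lambda>w. {v, w}) ` B"
    using A_subset B_subset by (auto simp: doubleton_eq_iff)
  ultimately show ?thesis
    using finite_A finite_B by (subst edges_eq) (simp add: card_Un_disjoint card_image)
qed

lemma maximal_matching_covers_u:
  assumes max: "maximal_matching E M" and "{u, v} \<notin> M" and A2: "2 \<le> card A"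
  shows "\<exists>e\<in>M. u \<in> e"
proof (rule ccontr)
  \<comment> \<open>Otherwise v is matched to some w', and uw with w in A - {w'} could be added to M.\<close>
  assume no_u: "\<not> (\<exists>e\<in>M. u \<in> e)"
  have ME: "M \<subseteq> E" and disj: "\<And>e f. e \<in> M \<Longrightarrow> f \<in> M \<Longrightarrow> e \<noteq> f \<Longrightarrow> e \<inter> f = {}"
    and meets: "\<And>e. e \<in> E - M \<Longrightarrow> \<exists>f\<in>M. e \<inter> f \<noteq> {}"
    using max by (auto simp: maximal_matching_iff matching_def)
  have v_in: "v \<in> f" if "f \<in> M" for f
    using edge_meets_uv[of f] ME that no_u by blast
  obtain f where f: "f \<in> M" using meets[of "{u, v}"] uv_edge \<open>{u, v} \<notin> M\<close> by blast
  then obtain w' where f_eq: "f = {v, w'}" using ME v_in by (meson edge_through subsetD)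
  have "\<not> A \<subseteq> {w'}" using A2 card_mono[of "{w'}" A] by auto
  then obtain w where w: "w \<in> A" "w \<noteq> w'" by blast
  then have uw: "{u, w} \<in> E - M" using no_u by (auto simp: neighbors_def)
  then obtain g where g: "g \<in> M" "{u, w} \<inter> g \<noteq> {}" using meets by blast
  have "g = f" using disj[OF g(1) f] v_in[OF g(1)] v_in[OF f] by blast
  moreover have "u \<notin> f" using no_u f by blast
  ultimately show False using g(2) w f_eq by auto
qed

lemma maximal_matching_covers_v:
  "maximal_matching E M \<Longrightarrow> {u, v} \<notin> M \<Longrightarrow> 2 \<le> card B \<Longrightarrow> \<exists>e\<in>M. v \<in> e"
  using dominating_edge_graph.maximal_matching_covers_u[OF swap] by (simp add: insert_commute)

definition cross_pairs :: "('a \<times> 'a) set" where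
  "cross_pairs = {(w, w'). w \<in> A \<and> w' \<in> B \<and> w \<noteq> w'}"

definition pair_matching :: "'a \<times> 'a \<Rightarrow> 'a set set" where
  "pair_matching = (\<lambda>(w, w'). {{u, w}, {v, w'}})"

lemma maximal_matching_uv: "maximal_matching E {{u, v}}"
  using uv_edge edge_meets_uv by (auto simp: maximal_matching_iff matching_def)

lemma maximal_matching_pair:
  assumes "p \<in> cross_pairs"
  shows "maximal_matching E (pair_matching p)"
proof -
  obtain w w' where p: "p = (w, w')" "w \<in> A" "w' \<in> B" "w \<noteq> w'"
    using assms by (auto simp: cross_pairs_def)
  have "{u, w} \<inter> {v, w'} = {}" using p A_subset B_subset u_neq_v by auto
  moreover have "{u, w} \<in> E" "{v, w'} \<in> E" using p by (auto simp: neighbors_def)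
  ultimately show ?thesis
    using edge_meets_uv by (auto simp: maximal_matching_iff matching_def pair_matching_def p(1))
qed

lemma maximal_matching_cases:
  assumes max: "maximal_matching E M" and "2 \<le> card A" "2 \<le> card B"
  shows "M = {{u, v}} \<or> (\<exists>p\<in>cross_pairs. M = pair_matching p)"
proof -
  have ME: "M \<subseteq> E" and disj: "\<And>e f. e \<in> M \<Longrightarrow> f \<in> M \<Longrightarrow> e \<noteq> f \<Longrightarrow> e \<inter> f = {}"
    using max by (auto simp: maximal_matching_def matching_def)
  have M_eq: "M = {e, f}" if "e \<in> M" "u \<in> e" "f \<in> M" "v \<in> f" for e f
  proof
    show "M \<subseteq> {e, f}"
    proof
      fix g assume "g \<in> M"
      then show "g \<in> {e, f}" using edge_meets_uv[of g] ME disj[of g e] disj[of g f] that by blast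
    qed
  qed (use that in simp)
  show ?thesis
  proof (cases "{u, v} \<in> M")
    case True
    then show ?thesis using M_eq[of "{u, v}" "{u, v}"] by simp
  next
    case False
    obtain e where e: "e \<in> M" "u \<in> e" using maximal_matching_covers_u[OF max False assms(2)] by blast
    obtain f where f: "f \<in> M" "v \<in> f" using maximal_matching_covers_v[OF max False assms(3)] by blast
    obtain w where w: "e = {u, w}" using edge_through e ME by blast
    obtain w' where w': "f = {v, w'}" using edge_through f ME by blast
    have "w \<noteq> v" "w' \<noteq> u" using False e f w w' by (auto simp: insert_commute)
    moreover have "e \<noteq> f" using False e f w' u_neq_v by (auto simp: insert_commute)
    then have "w \<noteq> w'" using disj[OF e(1) f(1)] w w' by auto
    moreover have "w \<in> neighbors E u" "w' \<in> neighbors E v" using e f w w' ME by (auto simp: neighbors_def)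
    ultimately have "(w, w') \<in> cross_pairs" by (simp add: cross_pairs_def)
    moreover have "M = pair_matching (w, w')" using M_eq[OF e f] w w' by (simp add: pair_matching_def)
    ultimately show ?thesis by blast
  qed
qed

lemma maximal_matchings_eq:
  assumes "2 \<le> card A" "2 \<le> card B"
  shows "maximal_matchings E = insert {{u, v}} (pair_matching ` cross_pairs)"
  using maximal_matching_cases[OF _ assms] maximal_matching_uv maximal_matching_pair
  by (auto simp: maximal_matchings_def)

lemma finite_cross_pairs: "finite cross_pairs"
  using finite_A finite_B by (rule finite_subset[OF _ finite_cartesian_product, rotated 1])
    (auto simp: cross_pairs_def)

lemma card_cross_pairs: "card cross_pairs = card A * card B - card (A \<inter> B)"
proof -
  have "cross_pairs = A \<times> B - (\<lambda>w. (w, w)) ` (A \<inter> B)" by (auto simp: cross_pairs_def)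
  moreover have "card ((\<lambda>w. (w, w)) ` (A \<inter> B)) = card (A \<inter> B)" by (simp add: card_image inj_on_def)
  ultimately show ?thesis
    using finite_A finite_B by (simp add: card_Diff_subset card_cartesian_product image_subset_iff)
qed

lemma cross_pairsE:
  assumes "p \<in> cross_pairs"
  obtains w w' where "p = (w, w')" "{u, w} \<in> E" "{v, w'} \<in> E" "w \<notin> {u, v}" "w' \<notin> {u, v}" "w \<noteq> w'"
proof -
  obtain w w' where p: "p = (w, w')" "w \<in> A" "w' \<in> B" "w \<noteq> w'"
    using assms by (auto simp: cross_pairs_def)
  moreover have "w \<notin> {u, v}" "w' \<notin> {u, v}" using p A_subset B_subset by blast+
  ultimately show thesis using that by (simp add: neighbors_def)
qed

lemma pair_matching_at_u:
  assumes "(w, w') \<in> cross_pairs"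
  shows "{e \<in> pair_matching (w, w'). u \<in> e} = {{u, w}}"
  using assms u_neq_v by (elim cross_pairsE) (auto simp: pair_matching_def)

lemma pair_matching_at_v:
  assumes "(w, w') \<in> cross_pairs"
  shows "{e \<in> pair_matching (w, w'). v \<in> e} = {{v, w'}}"
  using assms u_neq_v by (elim cross_pairsE) (auto simp: pair_matching_def)

lemma inj_on_pair_matching: "inj_on pair_matching cross_pairs"
proof (rule inj_onI, clarify)
  fix w w' z z' assume p: "(w, w') \<in> cross_pairs" and q: "(z, z') \<in> cross_pairs"
    and eq: "pair_matching (w, w') = pair_matching (z, z')"
  have "{{u, w}} = {{u, z}}" using pair_matching_at_u[OF p] pair_matching_at_u[OF q] eq by simp
  moreover have "{{v, w'}} = {{v, z'}}" using pair_matching_at_v[OF p] pair_matching_at_v[OF q] eq by simp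
  ultimately show "w = z \<and> w' = z'" by (auto simp: doubleton_eq_iff)
qed

lemma card_pair_matching: "p \<in> cross_pairs \<Longrightarrow> card (pair_matching p) = 2"
  using u_neq_v by (elim cross_pairsE) (auto simp: pair_matching_def doubleton_eq_iff)

lemma singleton_uv_notin_pair_matchings: "{{u, v}} \<notin> pair_matching ` cross_pairs"
proof
  assume "{{u, v}} \<in> pair_matching ` cross_pairs"
  then obtain w w' where p: "(w, w') \<in> cross_pairs" and "{{u, v}} = pair_matching (w, w')" by auto
  then have "{{u, v}} = {{u, w}}" using pair_matching_at_u[OF p] by auto
  then show False using p by (elim cross_pairsE) (auto simp: doubleton_eq_iff)
qed

lemma avm_eq:
  assumes "2 \<le> card A" "2 \<le> card B"
  shows "avm E = (1 + 2 * real (card cross_pairs)) / (1 + real (card cross_pairs))"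
proof -
  note MM = maximal_matchings_eq[OF assms]
  have "card (maximal_matchings E) = 1 + card cross_pairs"
    using singleton_uv_notin_pair_matchings finite_cross_pairs
    by (simp add: MM card_image[OF inj_on_pair_matching])
  moreover have "(\<Sum>M\<in>maximal_matchings E. real (card M)) = 1 + 2 * real (card cross_pairs)"
    using singleton_uv_notin_pair_matchings finite_cross_pairs card_pair_matching
    by (simp add: MM sum.reindex[OF inj_on_pair_matching])
  ultimately show ?thesis by (simp add: avm_def)
qed

lemma card_V_minus_uv: "card (V - {u, v}) + 2 = card V"
proof -
  have "card V \<ge> card {u, v}" using u_in_V v_in_V finite_V by (intro card_mono) auto
  then show ?thesis using u_in_V v_in_V u_neq_v finite_V by (simp add: card_Diff_subset)
qed

lemma A_Un_B:
  assumes "connected_graph V E"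
  shows "A \<union> B = V - {u, v}"
proof
  show "A \<union> B \<subseteq> V - {u, v}" using A_subset B_subset by blast
  show "V - {u, v} \<subseteq> A \<union> B"
  proof
    fix w assume w: "w \<in> V - {u, v}"
    then obtain z where z: "{z, w} \<in> E"
      using connected_graph_has_neighbor[OF assms u_in_V] by blast
    then have "z = u \<or> z = v" using edge_meets_uv[OF z] w by auto
    then show "w \<in> A \<union> B" using z w by (auto simp: neighbors_def)
  qed
qed

lemma card_A_Int_B:
  assumes "connected_graph V E" and "card E = card V + 1"
  shows "card (A \<inter> B) = 2"
proof -
  have "card (A \<union> B) + 2 = card V"
    using card_V_minus_uv by (simp add: A_Un_B[OF assms(1)])
  moreover have "card (A \<union> B) + card (A \<inter> B) = card A + card B"
    using finite_A finite_B by (rule card_Un_Int[symmetric])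
  ultimately show ?thesis using card_edges assms(2) by linarith
qed

lemma card_A_or_card_B_eq_2_if_graph_iso:
  assumes "card E = card V + 1" and "card V = n" and "4 \<le> n"
    and iso: "graph_iso V E (theta_V n) (theta_E n)"
  shows "card A = 2 \<or> card B = 2"
proof -
  have "0 \<in> theta_V n" using assms(3) by (simp add: theta_V_def)
  then obtain p where p: "p \<in> V" "\<forall>w\<in>V - {p}. {p, w} \<in> E"
    using graph_iso_universal_vertex[OF iso _ theta_universal_vertex[OF assms(3)]] by blast
  have card_AB: "card A + card B = card V" using card_edges assms(1) by simp
  consider "p = u" | "p = v" | "p \<notin> {u, v}" by blast
  then show ?thesis
  proof cases
    case 1
    then have "A = V - {u, v}" using p A_subset by (auto simp: neighbors_def)
    then show ?thesis using card_AB card_V_minus_uv by simp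
  next
    case 2
    then have "B = V - {u, v}" using p B_subset by (auto simp: neighbors_def)
    then show ?thesis using card_AB card_V_minus_uv by simp
  next
    case 3
    have "card {u, v, p} \<le> 3" by (auto simp: card_insert_if)
    then have "\<not> V \<subseteq> {u, v, p}"
      using card_mono[of "{u, v, p}" V] assms(2,3) finite_V by auto
    then obtain w where "w \<in> V" "w \<notin> {u, v, p}" by blast
    then have "{p, w} \<in> E" using p by auto
    then show ?thesis using edge_meets_uv 3 \<open>w \<notin> {u, v, p}\<close> by blast
  qed
qed

lemma graph_iso_theta_if_card_B_eq_2:
  assumes "connected_graph V E" and "card E = card V + 1" and "card V = n" and "4 \<le> n"
    and "card B = 2"
  shows "graph_iso V E (theta_V n) (theta_E n)"
proof -
  have "A \<inter> B = B"
    using card_A_Int_B[OF assms(1,2)] assms(5) finite_B by (metis Int_lower2 card_subset_eq)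
  then have A_eq: "A = V - {u, v}" using A_Un_B[OF assms(1)] by blast
  obtain x y where B_eq: "B = {x, y}" and "x \<noteq> y" using assms(5) by (auto simp: card_2_iff)
  then have "distinct [u, v, x, y]" "set [u, v, x, y] \<subseteq> V"
    using B_subset u_in_V v_in_V u_neq_v by auto
  then obtain f where f: "bij_betw f V {0..<n}"
    and f_nth: "\<And>i. i < length [u, v, x, y] \<Longrightarrow> f ([u, v, x, y] ! i) = i"
    using ex_bij_betw_extending_list[OF finite_V assms(3)] by blast
  have f_uvxy: "f u = 0" "f v = 1" "f x = 2" "f y = 3"
    using f_nth[of 0] f_nth[of 1] f_nth[of 2] f_nth[of 3] by simp_all
  have "f ` A = f ` V - f ` {u, v}"
    unfolding A_eq using f u_in_V v_in_V by (intro inj_on_image_set_diff) (auto simp: bij_betw_def)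
  also have "\<dots> = {2..<n}" using f f_uvxy by (auto simp: bij_betw_def)
  finally have f_A: "f ` A = {2..<n}" .
  have "(`) f ` E = insert {0, 1} ((\<lambda>w. {0, f w}) ` A \<union> (\<lambda>w. {1, f w}) ` B)"
    by (subst edges_eq) (simp add: image_Un image_image f_uvxy)
  also have "\<dots> = theta_E n"
    unfolding theta_E_eq[OF assms(4)] f_A[symmetric] B_eq by (simp add: image_image f_uvxy)
  finally have "(`) f ` E = theta_E n" .
  moreover have "\<forall>e\<in>E. e \<subseteq> V" using simple by (simp add: simple_graph_def)
  ultimately have "graph_iso V E {0..<n} (theta_E n)" using graph_iso_image[OF f, of E] by simp
  then show ?thesis by (simp add: theta_V_def)
qed

lemma avm_bound:
  assumes connected: "connected_graph V E" and card_E: "card E = card V + 1"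
    and card_V: "card V = n" and "5 \<le> n"
  shows "(4 * real n - 11) / (2 * real n - 5) \<le> avm E \<and>
    (avm E = (4 * real n - 11) / (2 * real n - 5) \<longleftrightarrow> graph_iso V E (theta_V n) (theta_E n))"
proof -
  define a b p where "a = card A" and "b = card B" and "p = real (card cross_pairs)"
  have "card (A \<inter> B) = 2" by (rule card_A_Int_B[OF connected card_E])
  then have a2: "2 \<le> a" and b2: "2 \<le> b"
    unfolding a_def b_def using finite_A finite_B by (metis Int_lower1 Int_lower2 card_mono)+
  have "a * b \<ge> 2" using mult_le_mono[OF a2 b2] by simp
  then have "p = real a * real b - 2"
    using card_cross_pairs \<open>card (A \<inter> B) = 2\<close> by (simp add: p_def a_def b_def of_nat_diff)
  moreover have "a + b = n" using card_edges card_E card_V by (simp add: a_def b_def)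
  ultimately have gap: "p - (2 * real n - 6) = (real a - 2) * (real b - 2)"
    by (simp add: algebra_simps flip: of_nat_add)
  have avm: "avm E = (1 + 2 * p) / (1 + p)" using avm_eq a2 b2 by (simp add: a_def b_def p_def)
  have bound: "(4 * real n - 11) / (2 * real n - 5) = (1 + 2 * (2 * real n - 6)) / (1 + (2 * real n - 6))"
    by (simp add: algebra_simps)
  have "4 \<le> n" using \<open>5 \<le> n\<close> by simp
  have iso: "graph_iso V E (theta_V n) (theta_E n) \<longleftrightarrow> a = 2 \<or> b = 2"
  proof
    assume "graph_iso V E (theta_V n) (theta_E n)"
    then show "a = 2 \<or> b = 2"
      using card_A_or_card_B_eq_2_if_graph_iso[OF card_E card_V \<open>4 \<le> n\<close>] by (simp add: a_def b_def)
  next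
    assume "a = 2 \<or> b = 2"
    then show "graph_iso V E (theta_V n) (theta_E n)"
      using graph_iso_theta_if_card_B_eq_2[OF connected card_E card_V \<open>4 \<le> n\<close>]
        dominating_edge_graph.graph_iso_theta_if_card_B_eq_2[OF swap connected card_E card_V \<open>4 \<le> n\<close>]
      by (auto simp: a_def b_def)
  qed
  have n6: "0 \<le> 2 * real n - 6" and p0: "0 \<le> p" using \<open>5 \<le> n\<close> by (simp_all add: p_def)
  have le: "(4 * real n - 11) / (2 * real n - 5) \<le> avm E \<longleftrightarrow> 2 * real n - 6 \<le> p"
    unfolding avm bound by (rule one_plus_two_ratio_le_iff[OF n6 p0])
  have eq: "avm E = (4 * real n - 11) / (2 * real n - 5) \<longleftrightarrow> p = 2 * real n - 6"
    unfolding avm bound by (rule one_plus_two_ratio_eq_iff[OF p0 n6])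
  have "0 \<le> (real a - 2) * (real b - 2)" using a2 b2 by simp
  moreover have "(real a - 2) * (real b - 2) = 0 \<longleftrightarrow> a = 2 \<or> b = 2" by auto
  ultimately show ?thesis unfolding le eq iso using gap by auto
qed

end

theorem theorem1p2:
  fixes V :: "'a set" and E :: "'a set set" and n :: nat
  assumes "simple_graph V E" and "connected_graph V E"
    and "card V = n" and "n \<ge> 5" and "card E = n + 1"
  shows "avm E \<ge> (4 * real n - 11) / (2 * real n - 5) \<and>
    (avm E = (4 * real n - 11) / (2 * real n - 5) \<longleftrightarrow> graph_iso V E (theta_V n) (theta_E n))"
proof (cases "\<exists>u v. dominating_edge E u v")
  case True
  then obtain u v where "dominating_edge E u v" by blast
  with assms(1) interpret dominating_edge_graph V E u v by unfold_locales
  show ?thesis using avm_bound assms by simp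
next
  case False
  have "E \<noteq> {}" using assms(5) by (intro notI) simp
  then have "2 \<le> avm E" by (rule avm_ge_2_if_no_dominating_edge[OF assms(1) _ False])
  moreover have "(4 * real n - 11) / (2 * real n - 5) < 2" using assms(4) by (simp add: divide_less_eq)
  moreover have "\<not> graph_iso V E (theta_V n) (theta_E n)"
  proof
    assume iso: "graph_iso V E (theta_V n) (theta_E n)"
    have "4 \<le> n" "0 \<in> theta_V n" "1 \<in> theta_V n" using assms(4) by (simp_all add: theta_V_def)
    then show False
      using graph_iso_dominating_edge[OF iso assms(1) dominating_edge_theta] False by blast
  qed
  ultimately show ?thesis by auto
qed

end
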